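(* Let $X$ and $Y$ be metric spaces with finite upper box dimensions, with metrics $d_X$ and $d_Y$, and let $\phi\colon X \to Y$ be any function. Set $s = \overline{\dim}_\mathrm{B} X + \overline{\dim}_\mathrm{B} Y + 2$. Then there exists a countable dense subset $Q = \{q_1, q_2, \dots\}$ of $X$ (with this enumeration) such that for every $x \in X$ there exists a sequence $(q_{n_k})_{k}$ of points of $Q$ with $\phi(q_{n_k}) \to \phi(x)$ as $k \to \infty$, $q_{n_k} \to x$ as $k\to\infty$, and $d_X(q_{n_k}, x) \le n_k^{-1/s}$ for all $k$.
   Context: The upper box dimension $\overline{\dim}_\mathrm{B} X$ of a metric space $X$ is the infimum of those $t$ such that for every $r>0$ there is a cover of $X$ by at most $r^{-t}$ balls of radius $r$ centred in $X$. *)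

theory Defs
  imports "HOL-Analysis.Analysis"
begin

text \<open>Valued in the extended reals (Inf of the empty set = infinity).\<close>

definition upper_box_dim :: "'a::metric_space set \<Rightarrow> ereal" where
  "upper_box_dim X = Inf (ereal ` {t::real. \<exists>r0>0. \<forall>r. 0 < r \<and> r < r0 \<longrightarrow>
      (\<exists>C. C \<subseteq> X \<and> finite C \<and> real (card C) \<le> r powr (-t) \<and> X \<subseteq> (\<Union>c\<in>C. ball c r))})"

end

theory Submission imports Defs "HOL-Library.Discrete_Functions" begin

(* For every large m pick a set P_m of at most 2^m points of X forming a net of the graph of phi
   at radius (2^(m+1)) powr (-1/s): every x in X has some p in P_m with p and phi p close to x and
   phi x.  Such nets exist because r-covers of X and Y of sizes r powr -a and r powr -b, with
   a + b = dim X + dim Y + 1 < s, combine into a 2r-net of the graph of size r powr -(a + b).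
   Listing P_m at the indices 2^m, ..., 2^(m+1) - 1 gives q; a point q n of P_m then approximates
   to within (2^(m+1)) powr (-1/s) <= n powr (-1/s). *)

lemma upper_box_dim_nonneg:
  fixes X :: "'a::metric_space set"
  assumes "X \<noteq> {}"
  shows "0 \<le> upper_box_dim X"
  unfolding upper_box_dim_def
proof (rule Inf_greatest, clarify)
  fix t r0 :: real
  assume "0 < r0" and covers: "\<forall>r. 0 < r \<and> r < r0 \<longrightarrow>
      (\<exists>C. C \<subseteq> X \<and> finite C \<and> real (card C) \<le> r powr (-t) \<and> X \<subseteq> (\<Union>c\<in>C. ball c r))"
  define r where "r = min (r0/2) (1/2)"
  have r: "0 < r" "r < r0" "r < 1" using \<open>0 < r0\<close> by (auto simp: r_def)
  then obtain C where C: "finite C" "real (card C) \<le> r powr (-t)" "X \<subseteq> (\<Union>c\<in>C. ball c r)"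
    using covers by auto
  have "C \<noteq> {}" using C(3) assms by blast
  with C(1) have "1 \<le> real (card C)" by (simp add: Suc_le_eq card_gt_0_iff)
  with C(2) have "1 \<le> r powr (-t)" by linarith
  show "0 \<le> ereal t"
  proof (rule ccontr)
    assume "\<not> 0 \<le> ereal t"
    then have "r powr (-t) < 1 powr (-t)" using r by (intro powr_less_mono2) auto
    with \<open>1 \<le> r powr (-t)\<close> show False by simp
  qed
qed

lemma upper_box_dim_less_imp_covers:
  fixes X :: "'a::metric_space set"
  assumes "upper_box_dim X < ereal t"
  obtains r0 where "0 < r0" "\<And>r. 0 < r \<Longrightarrow> r < r0 \<Longrightarrow>
      \<exists>C. C \<subseteq> X \<and> finite C \<and> real (card C) \<le> r powr (-t) \<and> X \<subseteq> (\<Union>c\<in>C. ball c r)"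
proof -
  obtain t' r0 where "t' < t" "0 < r0" and covers: "\<forall>r. 0 < r \<and> r < r0 \<longrightarrow>
      (\<exists>C. C \<subseteq> X \<and> finite C \<and> real (card C) \<le> r powr (-t') \<and> X \<subseteq> (\<Union>c\<in>C. ball c r))"
    using assms unfolding upper_box_dim_def Inf_less_iff by auto
  show ?thesis
  proof
    show "0 < min r0 1" using \<open>0 < r0\<close> by simp
  next
    fix r assume "0 < r" "r < min r0 1"
    then obtain C where C: "C \<subseteq> X" "finite C" "real (card C) \<le> r powr (-t')" "X \<subseteq> (\<Union>c\<in>C. ball c r)"
      using covers by auto
    have "r powr (-t') \<le> r powr (-t)"
      using \<open>t' < t\<close> \<open>0 < r\<close> \<open>r < min r0 1\<close> by (intro powr_mono') auto
    with C show "\<exists>C. C \<subseteq> X \<and> finite C \<and> real (card C) \<le> r powr (-t) \<and> X \<subseteq> (\<Union>c\<in>C. ball c r)"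
      by (intro exI[of _ C]) auto
  qed
qed

definition graph_net :: "('a::metric_space \<Rightarrow> 'b::metric_space) \<Rightarrow> 'a set \<Rightarrow> real \<Rightarrow> 'a set \<Rightarrow> bool"
  where "graph_net phi X r P \<longleftrightarrow>
    P \<subseteq> X \<and> finite P \<and> (\<forall>x\<in>X. \<exists>p\<in>P. dist p x < r \<and> dist (phi p) (phi x) < r)"

lemma graph_net_from_covers:
  fixes phi :: "'a::metric_space \<Rightarrow> 'b::metric_space"
  assumes "finite CX" "X \<subseteq> (\<Union>c\<in>CX. ball c r)" "finite CY" "Y \<subseteq> (\<Union>e\<in>CY. ball e r)"
    and "phi ` X \<subseteq> Y"
  obtains P where "graph_net phi X (2 * r) P" "card P \<le> card CX * card CY"
proof
  define S where "S = {(c, e) \<in> CX \<times> CY. \<exists>x\<in>X. dist c x < r \<and> dist e (phi x) < r}"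
  define pick where "pick = (\<lambda>(c, e). SOME x. x \<in> X \<and> dist c x < r \<and> dist e (phi x) < r)"
  have pick: "pick (c, e) \<in> X \<and> dist c (pick (c, e)) < r \<and> dist e (phi (pick (c, e))) < r"
    if "(c, e) \<in> S" for c e
  proof -
    from that obtain x where "x \<in> X \<and> dist c x < r \<and> dist e (phi x) < r"
      by (auto simp: S_def)
    then show ?thesis unfolding pick_def prod.case by (rule someI)
  qed
  have "S \<subseteq> CX \<times> CY" by (auto simp: S_def)
  then have "finite S" using assms(1,3) by (meson finite_SigmaI finite_subset)
  show "card (pick ` S) \<le> card CX * card CY"
  proof -
    have "card (pick ` S) \<le> card S" using \<open>finite S\<close> by (rule card_image_le)
    also have "\<dots> \<le> card (CX \<times> CY)"
      using assms(1,3) \<open>S \<subseteq> CX \<times> CY\<close> by (intro card_mono) auto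
    finally show ?thesis by (simp add: card_cartesian_product)
  qed
  have "\<exists>p\<in>pick ` S. dist p x < 2 * r \<and> dist (phi p) (phi x) < 2 * r" if "x \<in> X" for x
  proof -
    obtain c where c: "c \<in> CX" "dist c x < r" using assms(2) \<open>x \<in> X\<close> by auto
    have "phi x \<in> Y" using assms(5) \<open>x \<in> X\<close> by auto
    then obtain e where e: "e \<in> CY" "dist e (phi x) < r" using assms(4) by auto
    have "(c, e) \<in> S" using c e \<open>x \<in> X\<close> by (auto simp: S_def)
    with pick have "dist c (pick (c, e)) < r" "dist e (phi (pick (c, e))) < r" by auto
    with c e have "dist (pick (c, e)) x < 2 * r \<and> dist (phi (pick (c, e))) (phi x) < 2 * r"
      by (smt (verit) dist_triangle3)
    with \<open>(c, e) \<in> S\<close> show ?thesis by blast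
  qed
  with pick \<open>finite S\<close> show "graph_net phi X (2 * r) (pick ` S)"
    unfolding graph_net_def by auto
qed

lemma graph_nets_below_upper_box_dims:
  fixes X :: "'a::metric_space set" and Y :: "'b::metric_space set" and phi :: "'a \<Rightarrow> 'b"
  assumes "upper_box_dim X < ereal a" "upper_box_dim Y < ereal b" "phi ` X \<subseteq> Y"
  obtains r0 where "0 < r0"
    "\<And>r. 0 < r \<Longrightarrow> r < r0 \<Longrightarrow> \<exists>P. graph_net phi X (2 * r) P \<and> real (card P) \<le> r powr (-(a + b))"
proof -
  obtain rX where "0 < rX" and coversX: "\<And>r. 0 < r \<Longrightarrow> r < rX \<Longrightarrow>
      \<exists>C. C \<subseteq> X \<and> finite C \<and> real (card C) \<le> r powr (-a) \<and> X \<subseteq> (\<Union>c\<in>C. ball c r)"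
    using upper_box_dim_less_imp_covers[OF assms(1)] by blast
  obtain rY where "0 < rY" and coversY: "\<And>r. 0 < r \<Longrightarrow> r < rY \<Longrightarrow>
      \<exists>C. C \<subseteq> Y \<and> finite C \<and> real (card C) \<le> r powr (-b) \<and> Y \<subseteq> (\<Union>c\<in>C. ball c r)"
    using upper_box_dim_less_imp_covers[OF assms(2)] by blast
  show ?thesis
  proof
    show "0 < min rX rY" using \<open>0 < rX\<close> \<open>0 < rY\<close> by simp
  next
    fix r assume r: "0 < r" "r < min rX rY"
    obtain CX where CX: "finite CX" "real (card CX) \<le> r powr (-a)" "X \<subseteq> (\<Union>c\<in>CX. ball c r)"
      using coversX[OF r(1)] r(2) by auto
    obtain CY where CY: "finite CY" "real (card CY) \<le> r powr (-b)" "Y \<subseteq> (\<Union>c\<in>CY. ball c r)"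
      using coversY[OF r(1)] r(2) by auto
    obtain P where P: "graph_net phi X (2 * r) P" "card P \<le> card CX * card CY"
      using graph_net_from_covers[OF CX(1,3) CY(1,3) assms(3)] .
    have "real (card P) \<le> real (card CX) * real (card CY)"
      using P(2) by (metis of_nat_le_iff of_nat_mult)
    also have "\<dots> \<le> r powr (-a) * r powr (-b)"
      using CX(2) CY(2) by (intro mult_mono) auto
    also have "\<dots> = r powr (-(a + b))"
      by (simp add: powr_add[symmetric])
    finally show "\<exists>P. graph_net phi X (2 * r) P \<and> real (card P) \<le> r powr (-(a + b))"
      using P(1) by blast
  qed
qed

lemma dyadic_block_enumeration:
  fixes P :: "nat \<Rightarrow> 'a set"
  assumes "\<And>m. finite (P m)" "\<And>m. card (P m) \<le> 2 ^ m" "\<And>m. P m \<subseteq> X" "x0 \<in> X"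
  obtains q :: "nat \<Rightarrow> 'a" where "range q \<subseteq> X" "\<And>m. P m \<subseteq> q ` {2 ^ m..<(2::nat) ^ Suc m}"
proof -
  have "\<forall>m. \<exists>h. bij_betw h {0..<card (P m)} (P m)"
    using ex_bij_betw_nat_finite assms(1) by blast
  then obtain h where h: "\<And>m. bij_betw (h m) {0..<card (P m)} (P m)"
    by metis
  define q where "q n = (let m = floor_log n; i = n - 2 ^ m in if i < card (P m) then h m i else x0)"
    for n
  show ?thesis
  proof
    show "range q \<subseteq> X"
    proof clarify
      fix n
      show "q n \<in> X"
        using assms(4) by (auto simp: q_def Let_def intro!: subsetD[OF assms(3)] bij_betw_apply[OF h])
    qed
    show "P m \<subseteq> q ` {2 ^ m..<2 ^ Suc m}" for m
    proof
      fix p assume "p \<in> P m"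
      then have "p \<in> h m ` {0..<card (P m)}"
        using h[of m] by (simp add: bij_betw_def)
      then obtain i where i: "i < card (P m)" "p = h m i"
        by auto
      with assms(2) have "i < 2 ^ m" by (meson order_less_le_trans)
      then have "floor_log (2 ^ m + i) = m" by (intro floor_log_eqI) auto
      with i have "q (2 ^ m + i) = p" by (simp add: q_def)
      with \<open>i < 2 ^ m\<close> show "p \<in> q ` {2 ^ m..<2 ^ Suc m}" by force
    qed
  qed
qed

lemma tendsto_by_dist_bound:
  fixes f :: "nat \<Rightarrow> 'a::metric_space"
  assumes "\<And>k. dist (f k) a < r k" "r \<longlonglongrightarrow> 0"
  shows "f \<longlonglongrightarrow> a"
  using assms(2)
proof (rule metric_tendsto_imp_tendsto)
  show "eventually (\<lambda>k. dist (f k) a \<le> dist (r k) 0) sequentially"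
  proof (rule always_eventually, rule allI)
    fix k
    show "dist (f k) a \<le> dist (r k) 0"
      using assms(1)[of k] zero_le_dist[of "f k" a] by (simp add: dist_real_def abs_if)
  qed
qed

lemma enumeration_from_graph_nets:
  fixes X :: "'a::metric_space set" and phi :: "'a \<Rightarrow> 'b::metric_space" and \<delta> :: "nat \<Rightarrow> real"
  assumes "X \<noteq> {}" "\<delta> \<longlonglongrightarrow> 0"
    and nets: "eventually (\<lambda>m. \<exists>P. graph_net phi X (\<delta> m) P \<and> card P \<le> 2 ^ m) sequentially"
  obtains q :: "nat \<Rightarrow> 'a" where "range q \<subseteq> X"
    "\<And>x. x \<in> X \<Longrightarrow> \<exists>n :: nat \<Rightarrow> nat. (\<forall>k. 1 \<le> n k \<and> dist (q (n k)) x < \<delta> (floor_log (n k))) \<and>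
       (\<lambda>k. q (n k)) \<longlonglongrightarrow> x \<and> (\<lambda>k. phi (q (n k))) \<longlonglongrightarrow> phi x"
proof -
  obtain m0 where m0: "\<And>m. m0 \<le> m \<Longrightarrow> \<exists>P. graph_net phi X (\<delta> m) P \<and> card P \<le> 2 ^ m"
    using nets unfolding eventually_sequentially by blast
  have "\<forall>m. \<exists>P. P \<subseteq> X \<and> finite P \<and> card P \<le> 2 ^ m \<and> (m0 \<le> m \<longrightarrow> graph_net phi X (\<delta> m) P)"
  proof
    fix m
    show "\<exists>P. P \<subseteq> X \<and> finite P \<and> card P \<le> 2 ^ m \<and> (m0 \<le> m \<longrightarrow> graph_net phi X (\<delta> m) P)"
      using m0[of m] by (cases "m0 \<le> m") (auto simp: graph_net_def)
  qed
  then obtain P where P: "\<And>m. P m \<subseteq> X" "\<And>m. finite (P m)" "\<And>m. card (P m) \<le> 2 ^ m"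
    "\<And>m. m0 \<le> m \<Longrightarrow> graph_net phi X (\<delta> m) (P m)"
    by metis
  obtain x0 where "x0 \<in> X" using assms(1) by blast
  obtain q :: "nat \<Rightarrow> 'a" where q: "range q \<subseteq> X" "\<And>m. P m \<subseteq> q ` {2 ^ m..<2 ^ Suc m}"
    using dyadic_block_enumeration[OF P(2,3,1) \<open>x0 \<in> X\<close>] by blast
  have "\<exists>n. (\<forall>k. 1 \<le> n k \<and> dist (q (n k)) x < \<delta> (floor_log (n k))) \<and>
       (\<lambda>k. q (n k)) \<longlonglongrightarrow> x \<and> (\<lambda>k. phi (q (n k))) \<longlonglongrightarrow> phi x" if "x \<in> X" for x
  proof -
    have "\<exists>n \<in> {2 ^ (k + m0)..<2 ^ Suc (k + m0)}.
        dist (q n) x < \<delta> (k + m0) \<and> dist (phi (q n)) (phi x) < \<delta> (k + m0)" for k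
    proof -
      obtain p where "p \<in> P (k + m0)" "dist p x < \<delta> (k + m0)" "dist (phi p) (phi x) < \<delta> (k + m0)"
        using P(4)[of "k + m0"] \<open>x \<in> X\<close> by (auto simp: graph_net_def)
      with q(2) show ?thesis by fastforce
    qed
    then obtain n where n: "\<And>k. n k \<in> {2 ^ (k + m0)..<2 ^ Suc (k + m0)}"
      "\<And>k. dist (q (n k)) x < \<delta> (k + m0)" "\<And>k. dist (phi (q (n k))) (phi x) < \<delta> (k + m0)"
      by metis
    have "floor_log (n k) = k + m0" for k
      using n(1)[of k] by (auto intro: floor_log_eqI)
    moreover have "1 \<le> n k" for k
      using n(1)[of k] by (simp add: order_trans[OF one_le_power])
    moreover have "(\<lambda>k. \<delta> (k + m0)) \<longlonglongrightarrow> 0"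
      using LIMSEQ_ignore_initial_segment[OF assms(2)] .
    then have "(\<lambda>k. q (n k)) \<longlonglongrightarrow> x" "(\<lambda>k. phi (q (n k))) \<longlonglongrightarrow> phi x"
      using n(2,3) by (auto intro: tendsto_by_dist_bound[where r = "\<lambda>k. \<delta> (k + m0)"])
    ultimately show ?thesis
      using n(2) by (intro exI[of _ n]) simp
  qed
  with q(1) that show ?thesis by blast
qed

definition dyadic_radius :: "real \<Rightarrow> nat \<Rightarrow> real"
  where "dyadic_radius s m = (2 ^ Suc m) powr (-1 / s)"

lemma dyadic_radius_pos: "0 < dyadic_radius s m"
  by (simp add: dyadic_radius_def)

lemma dyadic_radius_eq_powr: "dyadic_radius s m = 2 powr (real (Suc m) * (-1 / s))"
proof -
  have "(2 :: real) ^ Suc m = 2 powr real (Suc m)"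
    by (rule powr_realpow[symmetric]) simp
  then show ?thesis
    unfolding dyadic_radius_def by (simp only: powr_powr)
qed

lemma dyadic_radius_tendsto_zero:
  assumes "0 < s"
  shows "dyadic_radius s \<longlonglongrightarrow> 0"
proof -
  have "dyadic_radius s = (\<lambda>m. (2 powr (-1 / s)) ^ Suc m)"
    unfolding dyadic_radius_eq_powr by (intro ext powr_power[symmetric]) simp
  moreover have "2 powr (-1 / s) < 1"
    using assms by (intro powr_less_one) auto
  then have "(\<lambda>m. (2 powr (-1 / s)) ^ Suc m) \<longlonglongrightarrow> 0"
    by (intro LIMSEQ_Suc LIMSEQ_power_zero) auto
  ultimately show ?thesis by simp
qed

lemma dyadic_radius_floor_log_le_powr:
  assumes "0 < s" "1 \<le> n"
  shows "dyadic_radius s (floor_log n) \<le> real n powr (-1 / s)"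
  unfolding dyadic_radius_def
proof (rule powr_mono2')
  have "n \<le> 2 ^ Suc (floor_log n)"
    using floor_log_exp2_ge[of n] by simp
  then show "real n \<le> 2 ^ Suc (floor_log n)"
    by (metis of_nat_le_iff of_nat_numeral of_nat_power)
qed (use assms in auto)

lemma eventually_dyadic_radius_powr_le_power2:
  fixes s t :: real
  assumes "0 < s" "t < s"
  shows "eventually (\<lambda>m. (dyadic_radius s m / 2) powr (-t) \<le> 2 ^ m) sequentially"
proof -
  have "0 < 1 - t / s" using assms by simp
  obtain N :: nat where N: "(t / s + t) / (1 - t / s) \<le> real N"
    using real_arch_simple by blast
  have "t * (real (Suc m) / s + 1) \<le> real m" if "N \<le> m" for m
  proof -
    have "(t / s + t) / (1 - t / s) \<le> real m" using N that by linarith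
    then have "t / s + t \<le> real m * (1 - t / s)"
      using \<open>0 < 1 - t / s\<close> by (simp add: pos_divide_le_eq)
    moreover have "t * (real (Suc m) / s + 1) = real m * (t / s) + (t / s + t)"
      by (simp add: algebra_simps add_divide_distrib)
    ultimately show ?thesis by (simp add: algebra_simps)
  qed
  then have "eventually (\<lambda>m. t * (real (Suc m) / s + 1) \<le> real m) sequentially"
    by (rule eventually_sequentiallyI)
  then show ?thesis
  proof (rule eventually_mono)
    fix m :: nat
    assume "t * (real (Suc m) / s + 1) \<le> real m"
    have "dyadic_radius s m / 2 = 2 powr (real (Suc m) * (-1 / s) - 1)"
      unfolding dyadic_radius_eq_powr by (simp add: powr_diff)
    then have "(dyadic_radius s m / 2) powr (-t) = 2 powr ((real (Suc m) * (-1 / s) - 1) * -t)"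
      by (simp only: powr_powr)
    also have "(real (Suc m) * (-1 / s) - 1) * -t = t * (real (Suc m) / s + 1)"
      by (simp add: field_simps)
    also have "2 powr \<dots> \<le> 2 powr real m"
      using \<open>t * (real (Suc m) / s + 1) \<le> real m\<close> by simp
    finally show "(dyadic_radius s m / 2) powr (-t) \<le> 2 ^ m"
      by (simp add: powr_realpow)
  qed
qed

lemma eventually_dyadic_graph_nets:
  fixes X :: "'a::metric_space set" and Y :: "'b::metric_space set" and phi :: "'a \<Rightarrow> 'b"
  assumes "upper_box_dim X < ereal a" "upper_box_dim Y < ereal b" "phi ` X \<subseteq> Y"
    and "0 < s" "a + b < s"
  shows "eventually (\<lambda>m. \<exists>P. graph_net phi X (dyadic_radius s m) P \<and> card P \<le> 2 ^ m) sequentially"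
proof -
  obtain r0 where "0 < r0" and nets: "\<And>r. 0 < r \<Longrightarrow> r < r0 \<Longrightarrow>
      \<exists>P. graph_net phi X (2 * r) P \<and> real (card P) \<le> r powr (-(a + b))"
    using graph_nets_below_upper_box_dims[OF assms(1-3)] by blast
  have "eventually (\<lambda>m. dyadic_radius s m < r0) sequentially"
    using dyadic_radius_tendsto_zero[OF \<open>0 < s\<close>] \<open>0 < r0\<close> by (rule order_tendstoD(2))
  moreover note eventually_dyadic_radius_powr_le_power2[OF assms(4,5)]
  ultimately show ?thesis
  proof eventually_elim
    case (elim m)
    have "0 < dyadic_radius s m / 2" by (simp add: dyadic_radius_pos)
    with elim obtain P where "graph_net phi X (dyadic_radius s m) P" "real (card P) \<le> 2 ^ m"
      using nets[of "dyadic_radius s m / 2"] by fastforce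
    then show ?case by (metis of_nat_le_iff of_nat_numeral of_nat_power)
  qed
qed

lemma dense_enumeration_from_dyadic_graph_nets:
  fixes X :: "'a::metric_space set" and phi :: "'a \<Rightarrow> 'b::metric_space"
  assumes "X \<noteq> {}" "0 < s"
    and "eventually (\<lambda>m. \<exists>P. graph_net phi X (dyadic_radius s m) P \<and> card P \<le> 2 ^ m) sequentially"
  shows "\<exists>q :: nat \<Rightarrow> 'a. q ` {1..} \<subseteq> X \<and> X \<subseteq> closure (q ` {1..}) \<and>
           (\<forall>x\<in>X. \<exists>n :: nat \<Rightarrow> nat. (\<forall>k. 1 \<le> n k) \<and>
              ((\<lambda>k. phi (q (n k))) \<longlonglongrightarrow> phi x) \<and>
              ((\<lambda>k. q (n k)) \<longlonglongrightarrow> x) \<and>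
              (\<forall>k. dist (q (n k)) x \<le> real (n k) powr (-1 / s)))"
proof -
  obtain q :: "nat \<Rightarrow> 'a" where q: "range q \<subseteq> X"
    "\<And>x. x \<in> X \<Longrightarrow> \<exists>n :: nat \<Rightarrow> nat.
       (\<forall>k. 1 \<le> n k \<and> dist (q (n k)) x < dyadic_radius s (floor_log (n k))) \<and>
       (\<lambda>k. q (n k)) \<longlonglongrightarrow> x \<and> (\<lambda>k. phi (q (n k))) \<longlonglongrightarrow> phi x"
    using enumeration_from_graph_nets[OF assms(1) dyadic_radius_tendsto_zero[OF assms(2)] assms(3)]
    by blast
  have approx: "\<exists>n :: nat \<Rightarrow> nat. (\<forall>k. 1 \<le> n k) \<and>
      ((\<lambda>k. phi (q (n k))) \<longlonglongrightarrow> phi x) \<and> ((\<lambda>k. q (n k)) \<longlonglongrightarrow> x) \<and>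
      (\<forall>k. dist (q (n k)) x \<le> real (n k) powr (-1 / s))" if x: "x \<in> X" for x
  proof -
    obtain n where n: "\<And>k. 1 \<le> n k" "\<And>k. dist (q (n k)) x < dyadic_radius s (floor_log (n k))"
      "(\<lambda>k. q (n k)) \<longlonglongrightarrow> x" "(\<lambda>k. phi (q (n k))) \<longlonglongrightarrow> phi x"
      using q(2)[OF x] by blast
    have "dist (q (n k)) x \<le> real (n k) powr (-1 / s)" for k
      using n(2)[of k] dyadic_radius_floor_log_le_powr[OF assms(2) n(1)[of k]] by linarith
    with n show ?thesis by blast
  qed
  have "X \<subseteq> closure (q ` {1..})"
  proof
    fix x assume "x \<in> X"
    then obtain n where "\<forall>k. 1 \<le> n k" "(\<lambda>k. q (n k)) \<longlonglongrightarrow> x"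
      using approx by blast
    then show "x \<in> closure (q ` {1..})"
      unfolding closure_sequential by (intro exI[of _ "\<lambda>k. q (n k)"]) auto
  qed
  with q(1) approx show ?thesis
    by blast
qed

theorem lemma3p1:
  fixes X :: "'a::metric_space set" and Y :: "'b::metric_space set"
    and phi :: "'a \<Rightarrow> 'b"
  assumes "X \<noteq> {}" and "Y \<noteq> {}"
    and "\<bar>upper_box_dim X\<bar> \<noteq> \<infinity>" and "\<bar>upper_box_dim Y\<bar> \<noteq> \<infinity>"
    and "phi ` X \<subseteq> Y"
    and "s = real_of_ereal (upper_box_dim X) + real_of_ereal (upper_box_dim Y) + 2"
  shows "\<exists>q :: nat \<Rightarrow> 'a. q ` {1..} \<subseteq> X \<and> X \<subseteq> closure (q ` {1..}) \<and>
           (\<forall>x\<in>X. \<exists>n :: nat \<Rightarrow> nat. (\<forall>k. 1 \<le> n k) \<and>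
              ((\<lambda>k. phi (q (n k))) \<longlonglongrightarrow> phi x) \<and>
              ((\<lambda>k. q (n k)) \<longlonglongrightarrow> x) \<and>
              (\<forall>k. dist (q (n k)) x \<le> real (n k) powr (-1 / s)))"
proof -
  define dX dY where "dX = real_of_ereal (upper_box_dim X)" and "dY = real_of_ereal (upper_box_dim Y)"
  have dims: "upper_box_dim X = ereal dX" "upper_box_dim Y = ereal dY"
    using assms(3,4) by (simp_all add: dX_def dY_def ereal_real)
  have "0 \<le> dX" "0 \<le> dY"
    using upper_box_dim_nonneg[OF assms(1)] upper_box_dim_nonneg[OF assms(2)] dims by simp_all
  have s_eq: "s = dX + dY + 2"
    using assms(6) by (simp add: dX_def dY_def)
  with \<open>0 \<le> dX\<close> \<open>0 \<le> dY\<close> have "0 < s" by simp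
  have "upper_box_dim X < ereal (dX + 1/2)" "upper_box_dim Y < ereal (dY + 1/2)"
    "dX + 1/2 + (dY + 1/2) < s"
    using dims s_eq by simp_all
  then have "eventually (\<lambda>m. \<exists>P. graph_net phi X (dyadic_radius s m) P \<and> card P \<le> 2 ^ m) sequentially"
    by (rule eventually_dyadic_graph_nets[OF _ _ assms(5) \<open>0 < s\<close>])
  then show ?thesis
    by (rule dense_enumeration_from_dyadic_graph_nets[OF assms(1) \<open>0 < s\<close>])
qed

end
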